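(* Let $s\in\mathbb N$, $\mathbf n<2^{2m_s+1}\mathbf 1$, and let $\Delta^{(m_s)}$ be a dyadic cube of rank $m_s$ with $\Delta^{(m_s)}\subset\widetilde F_{s-1}$. Then, for $\tau=\tau_F$, $$\int_{F_s\cap\Delta^{(m_s)}}W_{\mathbf n}\,d\mu=2^{-s}\int_{\Delta^{(m_s)}}W_{\mathbf n}\,d\tau=2^{-s}\widehat\tau_{\mathbf n}(\Delta^{(m_s)}).$$ The same holds when $F_s$, $\widetilde F_{s-1}$ and $\tau$ are replaced by $F^{\boldsymbol\pi}_s$, $\widetilde F^{\boldsymbol\pi}_{s-1}$ and $\tau^{\boldsymbol\pi}=\tau_{F^{\boldsymbol\pi}}$, for any sequence $\boldsymbol\pi=(\boldsymbol\pi_s)$ of permutations $\boldsymbol\pi_s$ of $\{0,\dots,2^{m_s}-1\}^d$.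
   Context: Fix $d\ge2$. $\mathbb G$ is the dyadic group: sequences $g=(g_k)_{k\ge0}$, $g_k\in\{0,1\}$, coordinatewise addition mod 2, product topology; $\mathbb G^d$ its $d$-th power, $\mu$ its normalized Haar measure. For $n\in\mathbb N_0$, $n=\sum_kn_k2^k$, $n_k\in\{0,1\}$. Dyadic interval of rank $k$: $\Delta^{(k)}_m=\{g: g_t=m_{k-1-t},\ 0\le t<k\}$; dyadic cube $\Delta^{(k)}_{\mathbf m}=\prod_l\Delta^{(k)}_{m^l}$. Vector order coordinatewise, $\mathbf 1=(1,\dots,1)$. Walsh functions $W_n(g)=\prod_k(-1)^{g_kn_k}$, $W_{\mathbf n}(\mathbf g)=\prod_lW_{n^l}(g^l)$; $W^{(k)}_{\mathbf n\mathbf m}$ is the constant value of $W_{\mathbf n}$ on $\Delta^{(k)}_{\mathbf m}$ ($\mathbf n,\mathbf m<2^k\mathbf 1$); $R_{k\mathbf 1}:=W_{2^k\mathbf 1}$. Quasimeasure: $\tau$ on dyadic cubes with $\tau(\Delta^{(k)}_{\mathbf m})=\sum_{\boldsymbol\sigma\in\{0,1\}^d}\tau(\Delta^{(k+1)}_{2\mathbf m+\boldsymbol\sigma})$; for a dyadic cube $\Delta$ of rank $r$, $\widehat\tau_{\mathbf n}(\Delta)=\int_\Delta W_{\mathbf n}d\tau:=\sum_{\Delta^{(k)}_{\mathbf m}\subset\Delta}W^{(k)}_{\mathbf n\mathbf m}\tau(\Delta^{(k)}_{\mathbf m})$ for any $k\ge r$ with $\mathbf n<2^k\mathbf 1$.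 For nonempty closed $E$, $\tau_E$ is the unique nonnegative quasimeasure with $\tau_E(\mathbb G^d)=1$, $\tau_E(\Delta)=0$ iff $\Delta\cap E=\emptyset$, splitting the value of a cube meeting $E$ equally among its $2^d$ children that meet $E$. Let $m_1=0$, $m_{s+1}=2(2m_s+1)$. $F_s=\bigcup_{\mathbf m,\mathbf m'<2^{m_s}\mathbf 1}\{\mathbf g\in\Delta^{(2m_s)}_{2^{m_s}\mathbf m+\mathbf m'}: R_{2m_s\mathbf 1}(\mathbf g)=W^{(m_s)}_{\mathbf m\mathbf m'}\}$, $\widetilde F_s=\bigcap_{k=1}^sF_k$, $\widetilde F_0=\mathbb G^d$, $F=\bigcap_sF_s$. $F^{\boldsymbol\pi}_s$ is defined likewise with $W^{(m_s)}_{\boldsymbol\pi_s(\mathbf m)\,\mathbf m'}$ in place of $W^{(m_s)}_{\mathbf m\mathbf m'}$; $\widetilde F^{\boldsymbol\pi}_s=\bigcap_{k=1}^sF^{\boldsymbol\pi}_k$, $\widetilde F^{\boldsymbol\pi}_0=\mathbb G^d$, $F^{\boldsymbol\pi}=\bigcap_sF^{\boldsymbol\pi}_s$. *)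

theory Defs
  imports "HOL-Probability.Probability"
begin

text \<open>Points of the dyadic group G are sequences nat => bool (digit g k).\<close>

definition Gd :: "nat \<Rightarrow> (nat \<Rightarrow> nat \<Rightarrow> bool) set" where
  "Gd d = PiE {..<d} (\<lambda>_. UNIV)"

text \<open>Normalized Haar measure on G (product of fair coins) and on G^d.\<close>
definition muG :: "(nat \<Rightarrow> bool) measure" where
  "muG = PiM UNIV (\<lambda>_. measure_pmf (bernoulli_pmf (1/2)))"

definition mu :: "nat \<Rightarrow> (nat \<Rightarrow> nat \<Rightarrow> bool) measure" where
  "mu d = PiM {..<d} (\<lambda>_. muG)"

definition vecs :: "nat \<Rightarrow> nat \<Rightarrow> (nat \<Rightarrow> nat) set" where
  "vecs d k = PiE {..<d} (\<lambda>_. {..<2^k})"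

definition cube :: "nat \<Rightarrow> nat \<Rightarrow> (nat \<Rightarrow> nat) \<Rightarrow> (nat \<Rightarrow> nat \<Rightarrow> bool) set" where
  "cube d k m = {g \<in> Gd d. \<forall>l<d. \<forall>t<k. g l t = odd (m l div 2 ^ (k - 1 - t))}"

definition walsh :: "nat \<Rightarrow> (nat \<Rightarrow> bool) \<Rightarrow> real" where
  "walsh n g = (\<Prod>k<n. if odd (n div 2 ^ k) \<and> g k then -1 else 1)"

definition Wv :: "nat \<Rightarrow> (nat \<Rightarrow> nat) \<Rightarrow> (nat \<Rightarrow> nat \<Rightarrow> bool) \<Rightarrow> real" where
  "Wv d n g = (\<Prod>l<d. walsh (n l) (g l))"

definition cpt :: "nat \<Rightarrow> nat \<Rightarrow> (nat \<Rightarrow> nat) \<Rightarrow> (nat \<Rightarrow> nat \<Rightarrow> bool)" where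
  "cpt d k m = (\<lambda>l\<in>{..<d}. \<lambda>t. t < k \<and> odd (m l div 2 ^ (k - 1 - t)))"

text \<open>W^{(k)}_{n m}: the (constant) value of W_n on the cube of rank k with index m.\<close>
definition Wk :: "nat \<Rightarrow> nat \<Rightarrow> (nat \<Rightarrow> nat) \<Rightarrow> (nat \<Rightarrow> nat) \<Rightarrow> real" where
  "Wk d k n m = Wv d n (cpt d k m)"

definition Rk :: "nat \<Rightarrow> nat \<Rightarrow> (nat \<Rightarrow> nat \<Rightarrow> bool) \<Rightarrow> real" where
  "Rk d k g = Wv d (\<lambda>_. 2 ^ k) g"

text \<open>The sequence m_s (s >= 1): m_1 = 0, m_{s+1} = 2(2 m_s + 1). The value at 0 is unused.\<close>
fun ms :: "nat \<Rightarrow> nat" where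
  "ms 0 = 0"
| "ms (Suc 0) = 0"
| "ms (Suc (Suc s)) = 2 * (2 * ms (Suc s) + 1)"

text \<open>F^pi_s (for s >= 1); F_s is the case pi_s = id.\<close>
definition Fpi :: "nat \<Rightarrow> (nat \<Rightarrow> (nat \<Rightarrow> nat) \<Rightarrow> (nat \<Rightarrow> nat)) \<Rightarrow> nat \<Rightarrow> (nat \<Rightarrow> nat \<Rightarrow> bool) set" where
  "Fpi d \<pi> s = {g \<in> Gd d. \<exists>m \<in> vecs d (ms s). \<exists>m' \<in> vecs d (ms s).
       g \<in> cube d (2 * ms s) (\<lambda>l. 2 ^ ms s * m l + m' l) \<and>
       Rk d (2 * ms s) g = Wk d (ms s) (\<pi> s m) m'}"

definition Ftil :: "nat \<Rightarrow> (nat \<Rightarrow> (nat \<Rightarrow> nat) \<Rightarrow> (nat \<Rightarrow> nat)) \<Rightarrow> nat \<Rightarrow> (nat \<Rightarrow> nat \<Rightarrow> bool) set" where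
  "Ftil d \<pi> s = Gd d \<inter> (\<Inter>k\<in>{1..s}. Fpi d \<pi> k)"

definition Finf :: "nat \<Rightarrow> (nat \<Rightarrow> (nat \<Rightarrow> nat) \<Rightarrow> (nat \<Rightarrow> nat)) \<Rightarrow> (nat \<Rightarrow> nat \<Rightarrow> bool) set" where
  "Finf d \<pi> = Gd d \<inter> (\<Inter>s\<in>{1..}. Fpi d \<pi> s)"

text \<open>The quasimeasure tau_E on dyadic cubes (rank k, index m): tau_E(G^d) = 1, and the value
  of a cube is split equally among its children that meet E (children missing E get 0).\<close>
fun tauE :: "nat \<Rightarrow> (nat \<Rightarrow> nat \<Rightarrow> bool) set \<Rightarrow> nat \<Rightarrow> (nat \<Rightarrow> nat) \<Rightarrow> real" where
  "tauE d E 0 m = 1"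
| "tauE d E (Suc k) m =
     (if cube d (Suc k) m \<inter> E = {} then 0
      else tauE d E k (\<lambda>l. m l div 2) /
        real (card {\<sigma> \<in> PiE {..<d} (\<lambda>_. {0, 1}).
                      cube d (Suc k) (\<lambda>l. 2 * (m l div 2) + \<sigma> l) \<inter> E \<noteq> {}}))"

text \<open>Integral of W_n over the cube of rank r with index m w.r.t. a quasimeasure tau
  (tau k m' = value on the cube of rank k with index m'), computed at the least
  admissible level k >= r with n < 2^k 1.\<close>
definition qint :: "nat \<Rightarrow> (nat \<Rightarrow> (nat \<Rightarrow> nat) \<Rightarrow> real) \<Rightarrow> nat \<Rightarrow> (nat \<Rightarrow> nat) \<Rightarrow> (nat \<Rightarrow> nat) \<Rightarrow> real" where
  "qint d \<tau> r m n =
     (let k = (LEAST k. r \<le> k \<and> (\<forall>l<d. n l < 2 ^ k))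
      in \<Sum>m' \<in> {m' \<in> vecs d k. cube d k m' \<subseteq> cube d r m}. Wk d k n m' * \<tau> k m')"

end

(*
  Every function that occurs depends on finitely many binary digits only, so its integral
  against the Haar measure is the average of its values at the points cpt of the dyadic cubes
  of a fixed rank.  Membership in F_t depends only on the first 2 m_t + 1 digits and is toggled
  by flipping digit 2 m_t of the first coordinate.  Hence a cube of rank k meets F exactly when
  its point satisfies the constraints F_t with 2 m_t < k (the halving levels below k), and each
  such constraint keeps exactly half of the children of a cube; so tau_F(Delta) = 2^(J - d k)
  on the cubes Delta of rank k meeting F, where J is the number of halving levels below k.

  For Delta of rank m_s inside F~_(s-1), the sum defining the tau_F-integral of W_n over Delta
  at level k <= 2 m_s + 1 is therefore 2^J times the mu-integral of W_n over Delta and F~_J.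
  If k = 2 m_s + 1, then J = s and this set is F_s restricted to Delta.  Otherwise J = s - 1,
  W_n does not see digit 2 m_s, and the flip symmetry shows that imposing F_s halves the
  integral over Delta.
*)
theory Submission
  imports Defs
begin

lemma sum_involution_half:
  fixes h :: "'a \<Rightarrow> 'b::comm_semiring_1"
  assumes "\<And>x. x \<in> A \<Longrightarrow> \<phi> x \<in> A" and "\<And>x. x \<in> A \<Longrightarrow> \<phi> (\<phi> x) = x"
    and "\<And>x. x \<in> A \<Longrightarrow> P (\<phi> x) \<longleftrightarrow> \<not> P x" and "\<And>x. x \<in> A \<Longrightarrow> h (\<phi> x) = h x"
  shows "2 * (\<Sum>x\<in>A. if P x then h x else 0) = (\<Sum>x\<in>A. h x)"
proof -
  have "(\<Sum>x\<in>A. if P x then h x else 0) = (\<Sum>x\<in>A. if \<not> P x then h x else 0)"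
    by (rule sum.reindex_bij_witness[where i=\<phi> and j=\<phi>]) (use assms in auto)
  moreover have "(\<Sum>x\<in>A. h x) = (\<Sum>x\<in>A. if P x then h x else 0) + (\<Sum>x\<in>A. if \<not> P x then h x else 0)"
    unfolding sum.distrib[symmetric] by (intro sum.cong) auto
  ultimately show ?thesis
    by (simp add: mult_2)
qed

lemma set_integral_eq_integral_indicator:
  fixes f :: "'a \<Rightarrow> real"
  shows "(LINT x : A | M. f x) = (LINT x | M. indicator A x * f x)"
  by (simp add: set_lebesgue_integral_def)

abbreviation agree :: "nat \<Rightarrow> nat \<Rightarrow> (nat \<Rightarrow> nat \<Rightarrow> bool) \<Rightarrow> (nat \<Rightarrow> nat \<Rightarrow> bool) \<Rightarrow> bool" where
  "agree d k g h \<equiv> \<forall>l<d. \<forall>t<k. g l t = h l t"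

lemma agree_mono: "agree d K g h \<Longrightarrow> k \<le> K \<Longrightarrow> agree d k g h"
  by (meson order.strict_trans2)

definition depends_on_digits :: "nat \<Rightarrow> nat \<Rightarrow> ((nat \<Rightarrow> nat \<Rightarrow> bool) \<Rightarrow> 'a) \<Rightarrow> bool" where
  "depends_on_digits d k f \<longleftrightarrow> (\<forall>g\<in>Gd d. \<forall>h\<in>Gd d. agree d k g h \<longrightarrow> f g = f h)"

lemma depends_on_digits_mono:
  assumes f: "depends_on_digits d k f" and "k \<le> K"
  shows "depends_on_digits d K f"
  unfolding depends_on_digits_def
proof (intro ballI impI)
  fix g h assume g: "g \<in> Gd d" and h: "h \<in> Gd d" and gh: "agree d K g h"
  from gh \<open>k \<le> K\<close> have "agree d k g h"
    by (rule agree_mono)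
  with f g h show "f g = f h"
    unfolding depends_on_digits_def by blast
qed

lemma depends_on_digits_mult:
  fixes f f' :: "(nat \<Rightarrow> nat \<Rightarrow> bool) \<Rightarrow> 'a::times"
  shows "depends_on_digits d k f \<Longrightarrow> depends_on_digits d k f' \<Longrightarrow>
    depends_on_digits d k (\<lambda>g. f g * f' g)"
  unfolding depends_on_digits_def by metis

subsection \<open>Dyadic cubes\<close>

lemma mem_cube_iff:
  "g \<in> cube d k m \<longleftrightarrow> g \<in> Gd d \<and> (\<forall>l<d. \<forall>t<k. g l t = bit (m l) (k - 1 - t))"
  unfolding cube_def by (simp add: bit_iff_odd)

lemma cpt_apply: "l < d \<Longrightarrow> cpt d k m l t = (t < k \<and> bit (m l) (k - 1 - t))"
  by (simp add: cpt_def bit_iff_odd)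

lemma cpt_in_Gd: "cpt d k m \<in> Gd d"
  by (simp add: cpt_def Gd_def)

lemma cube_iff_agree_cpt: "g \<in> cube d k m \<longleftrightarrow> g \<in> Gd d \<and> agree d k g (cpt d k m)"
  by (auto simp: mem_cube_iff cpt_apply)

lemma cpt_in_cube: "cpt d k m \<in> cube d k m"
  by (simp add: cube_iff_agree_cpt cpt_in_Gd)

lemma cube_subset_iff_cpt: "r \<le> k \<Longrightarrow> cube d k m \<subseteq> cube d r m' \<longleftrightarrow> cpt d k m \<in> cube d r m'"
  using cpt_in_cube by (fastforce simp: mem_cube_iff cpt_apply)

lemma cube_cong: "(\<And>l. l < d \<Longrightarrow> m l = m' l) \<Longrightarrow> cube d k m = cube d k m'"
  unfolding cube_def by auto

lemma cube_subset_parent: "cube d (Suc k) m \<subseteq> cube d k (\<lambda>l. m l div 2)"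
proof
  fix g assume g: "g \<in> cube d (Suc k) m"
  have "Suc k - 1 - t = Suc (k - 1 - t)" if "t < k" for t
    using that by simp
  with g show "g \<in> cube d k (\<lambda>l. m l div 2)"
    by (auto simp: mem_cube_iff bit_Suc)
qed

lemma cube_child_subset:
  assumes "\<sigma> \<in> PiE {..<d} (\<lambda>_. {0, 1})"
  shows "cube d (Suc k) (\<lambda>l. 2 * p l + \<sigma> l) \<subseteq> cube d k p"
proof -
  have "cube d k (\<lambda>l. (2 * p l + \<sigma> l) div 2) = cube d k p"
  proof (rule cube_cong)
    fix l assume "l < d"
    with assms have "\<sigma> l \<in> {0, 1}"
      by (auto simp: PiE_iff)
    then show "(2 * p l + \<sigma> l) div 2 = p l"
      by auto
  qed
  then show ?thesis
    using cube_subset_parent by metis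
qed

lemma depends_on_digits_cube: "r \<le> k \<Longrightarrow> depends_on_digits d k (indicator (cube d r m))"
  unfolding depends_on_digits_def indicator_def mem_cube_iff by auto

text \<open>The binary digits of \<open>dyadic_index k x\<close> are \<open>x 0, \<dots>, x (k - 1)\<close>, most significant
  first, as in the indexing of dyadic cubes.\<close>
primrec dyadic_index :: "nat \<Rightarrow> (nat \<Rightarrow> bool) \<Rightarrow> nat" where
  "dyadic_index 0 x = 0"
| "dyadic_index (Suc k) x = 2 * dyadic_index k x + (if x k then 1 else 0)"

lemma dyadic_index_less: "dyadic_index k x < 2 ^ k"
  by (induct k) auto

lemma bit_dyadic_index: "bit (dyadic_index k x) i \<longleftrightarrow> i < k \<and> x (k - 1 - i)"
proof (induct k arbitrary: i)
  case (Suc k)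
  have "(2 * dyadic_index k x + (if x k then 1 else 0)) div 2 = dyadic_index k x"
    by auto
  with Suc show ?case
    by (cases i) (simp_all add: bit_0 bit_Suc)
qed simp

lemma dyadic_index_cong: "(\<And>t. t < k \<Longrightarrow> x t = y t) \<Longrightarrow> dyadic_index k x = dyadic_index k y"
  by (induct k) auto

lemma in_cube_dyadic_index: "g \<in> Gd d \<Longrightarrow> g \<in> cube d k (\<lambda>l. dyadic_index k (g l))"
  by (auto simp: mem_cube_iff bit_dyadic_index)

lemma cube_index_eq_dyadic_index:
  assumes g: "g \<in> cube d k m" and l: "l < d" and m: "m l < 2 ^ k"
  shows "m l = dyadic_index k (g l)"
proof -
  have "bit (m l) i = bit (dyadic_index k (g l)) i" if i: "i < k" for i
  proof -
    have "k - 1 - (k - 1 - i) = i" using i by simp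
    with g l i show ?thesis
      by (auto simp: mem_cube_iff bit_dyadic_index dest: spec[of _ "k - 1 - i"])
  qed
  then have "take_bit k (m l) = take_bit k (dyadic_index k (g l))"
    by (intro bit_eqI) (auto simp: bit_take_bit_iff)
  with m dyadic_index_less show ?thesis
    by (simp add: take_bit_nat_eq_self)
qed

lemma vecs_cube_unique:
  assumes "m \<in> vecs d k" and "g \<in> cube d k m"
  shows "m = (\<lambda>l\<in>{..<d}. dyadic_index k (g l))"
  using assms cube_index_eq_dyadic_index[OF assms(2)]
  by (auto simp: vecs_def PiE_iff extensional_def fun_eq_iff)

subsection \<open>Integrals of functions of finitely many digits\<close>

lemma space_mu: "space (mu d) = Gd d"
  by (simp add: mu_def muG_def space_PiM Gd_def PiE_UNIV_domain)

lemma prob_space_muG: "prob_space muG"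
  unfolding muG_def by (intro prob_space_PiM prob_space_measure_pmf)

lemma prob_space_mu: "prob_space (mu d)"
  unfolding mu_def by (intro prob_space_PiM prob_space_muG)

lemma cylinder_eq_prod_emb:
  "{x::nat \<Rightarrow> bool. \<forall>t<K. x t = b t} =
     prod_emb UNIV (\<lambda>_. measure_pmf (bernoulli_pmf (1/2))) {..<K} (PiE {..<K} (\<lambda>t. {b t}))"
  by (rule set_eqI) (simp add: prod_emb_def space_PiM PiE_UNIV_domain restrict_PiE_iff Pi_iff, blast)

lemma cylinder_in_sets: "{x::nat \<Rightarrow> bool. \<forall>t<K. x t = b t} \<in> sets muG"
  unfolding cylinder_eq_prod_emb muG_def by (rule sets_PiM_I) auto

lemma emeasure_cylinder: "emeasure muG {x::nat \<Rightarrow> bool. \<forall>t<K. x t = b t} = ennreal ((1/2) ^ K)"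
proof -
  have "emeasure muG {x::nat \<Rightarrow> bool. \<forall>t<K. x t = b t} =
      (\<Prod>t<K. emeasure (measure_pmf (bernoulli_pmf (1/2))) {b t})"
    unfolding cylinder_eq_prod_emb muG_def
    by (rule emeasure_PiM_emb) (auto intro: prob_space_measure_pmf)
  also have "\<dots> = (\<Prod>t<K. ennreal (1/2))"
    by (intro prod.cong refl) (simp add: emeasure_pmf_single)
  also have "\<dots> = ennreal ((1/2) ^ K)"
    by (simp only: prod_constant card_lessThan ennreal_power[of "1/2"])
  finally show ?thesis .
qed

lemma cube_eq_PiE: "cube d k m = PiE {..<d} (\<lambda>l. {x. \<forall>t<k. x t = bit (m l) (k - 1 - t)})"
  by (intro set_eqI) (auto simp: mem_cube_iff Gd_def PiE_iff)

lemma cube_in_sets: "cube d k m \<in> sets (mu d)"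
  unfolding cube_eq_PiE mu_def by (rule sets_PiM_I_finite) (auto intro: cylinder_in_sets)

lemma measure_cube: "measure (mu d) (cube d k m) = (1/2) ^ (d * k)"
proof -
  define C where "C l = {x. \<forall>t<k. x t = bit (m l) (k - 1 - t)}" for l
  have "emeasure (mu d) (cube d k m) =
      emeasure (PiM {..<d} (\<lambda>_. muG)) (prod_emb {..<d} (\<lambda>_. muG) {..<d} (PiE {..<d} C))"
    unfolding cube_eq_PiE mu_def C_def
    by (subst prod_emb_PiE_same_index) (auto simp: muG_def space_PiM PiE_UNIV_domain)
  also have "\<dots> = (\<Prod>l<d. emeasure muG (C l))"
    by (rule emeasure_PiM_emb) (auto intro: prob_space_muG cylinder_in_sets simp: C_def)
  also have "\<dots> = (\<Prod>l<d. ennreal ((1/2) ^ k))"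
    by (simp only: C_def emeasure_cylinder)
  also have "\<dots> = ennreal ((1/2) ^ (d * k))"
    by (simp only: prod_constant card_lessThan ennreal_power[of "(1/2) ^ k"] zero_le_power)
      (simp add: power_mult[symmetric] mult.commute)
  finally show ?thesis
    by (simp add: measure_def)
qed

lemma integral_depends_on_digits:
  fixes f :: "(nat \<Rightarrow> nat \<Rightarrow> bool) \<Rightarrow> real"
  assumes f: "depends_on_digits d K f"
  shows "integral\<^sup>L (mu d) f = (1/2) ^ (d * K) * (\<Sum>m\<in>vecs d K. f (cpt d K m))"
proof -
  interpret prob_space "mu d" by (rule prob_space_mu)
  have fin: "finite (vecs d K)"
    by (simp add: vecs_def finite_PiE)
  have f_eq: "f g = (\<Sum>m\<in>vecs d K. f (cpt d K m) * indicator (cube d K m) g)"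
    if "g \<in> space (mu d)" for g
  proof -
    define m0 where "m0 = (\<lambda>l\<in>{..<d}. dyadic_index K (g l))"
    have g: "g \<in> Gd d" using that by (simp add: space_mu)
    have m0: "m0 \<in> vecs d K" "g \<in> cube d K m0"
      using dyadic_index_less in_cube_dyadic_index[OF g]
      by (auto simp: m0_def vecs_def cube_def)
    have "g \<in> cube d K m \<longleftrightarrow> m = m0" if "m \<in> vecs d K" for m
      using vecs_cube_unique[OF that] m0 by (auto simp: m0_def)
    then have "(\<Sum>m\<in>vecs d K. f (cpt d K m) * indicator (cube d K m) g) = f (cpt d K m0)"
      using m0 fin by (simp add: indicator_def if_distrib[of "(*) _"] sum.delta' cong: sum.cong)
    also have "\<dots> = f g"
      using f m0(2) g cpt_in_Gd unfolding depends_on_digits_def cube_iff_agree_cpt by metis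
    finally show ?thesis by simp
  qed
  have "integral\<^sup>L (mu d) f =
      integral\<^sup>L (mu d) (\<lambda>g. \<Sum>m\<in>vecs d K. f (cpt d K m) * indicator (cube d K m) g)"
    by (rule Bochner_Integration.integral_cong[OF refl f_eq])
  also have "\<dots> = (\<Sum>m\<in>vecs d K. integral\<^sup>L (mu d) (\<lambda>g. f (cpt d K m) * indicator (cube d K m) g))"
    by (rule Bochner_Integration.integral_sum)
      (auto intro!: integrable_mult_right integrable_real_indicator cube_in_sets
        simp: less_top[symmetric])
  also have "\<dots> = (\<Sum>m\<in>vecs d K. f (cpt d K m) * (1/2) ^ (d * K))"
    using cube_in_sets by (simp add: measure_cube)
  finally show ?thesis
    by (simp add: sum_distrib_left mult.commute)
qed

lemma walsh_cong: "n < 2 ^ K \<Longrightarrow> (\<And>t. t < K \<Longrightarrow> x t = y t) \<Longrightarrow> walsh n x = walsh n y"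
  unfolding walsh_def
  by (intro prod.cong refl)
    (metis bit_iff_odd bit_take_bit_iff not_less take_bit_nat_eq_self)

lemma depends_on_digits_Wv: "(\<And>l. l < d \<Longrightarrow> n l < 2 ^ K) \<Longrightarrow> depends_on_digits d K (Wv d n)"
  unfolding depends_on_digits_def Wv_def by (auto intro!: prod.cong walsh_cong)

lemma abs_Wv: "\<bar>Wv d n g\<bar> = 1"
  unfolding Wv_def walsh_def abs_prod by (intro prod.neutral ballI) (simp add: abs_prod)

lemma walsh_power_of_two: "walsh (2 ^ j) x = (if x j then -1 else 1)"
proof -
  have "odd ((2::nat) ^ j div 2 ^ i) \<longleftrightarrow> i = j" for i
    using bit_iff_odd[of "(2::nat) ^ j" i] by (simp add: bit_exp_iff)
  then have "walsh (2 ^ j) x = (\<Prod>i<2 ^ j. if i = j then (if x j then -1 else 1) else 1)"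
    unfolding walsh_def by (intro prod.cong) auto
  also have "\<dots> = (if x j then -1 else 1)"
    by (simp add: prod.delta)
  finally show ?thesis .
qed

lemma Rk_eq_prod: "Rk d j g = (\<Prod>l<d. if g l j then -1 else 1)"
  unfolding Rk_def Wv_def by (simp add: walsh_power_of_two)

subsection \<open>The sets \<open>F\<^sub>s\<close>\<close>

text \<open>The indices \<open>m\<close> and \<open>m'\<close> in the definition of \<open>F\<^sub>s\<close>, read off from the first \<open>2 m\<^sub>s\<close>
  digits of a point.\<close>
definition coarse_index :: "nat \<Rightarrow> nat \<Rightarrow> (nat \<Rightarrow> nat \<Rightarrow> bool) \<Rightarrow> nat \<Rightarrow> nat" where
  "coarse_index d a g = (\<lambda>l\<in>{..<d}. dyadic_index (2 * a) (g l) div 2 ^ a)"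

definition fine_index :: "nat \<Rightarrow> nat \<Rightarrow> (nat \<Rightarrow> nat \<Rightarrow> bool) \<Rightarrow> nat \<Rightarrow> nat" where
  "fine_index d a g = (\<lambda>l\<in>{..<d}. dyadic_index (2 * a) (g l) mod 2 ^ a)"

lemma coarse_index_in_vecs: "coarse_index d a g \<in> vecs d a"
  using dyadic_index_less[of "2 * a"]
  by (auto simp: coarse_index_def vecs_def less_mult_imp_div_less power_add[symmetric] mult_2)

lemma fine_index_in_vecs: "fine_index d a g \<in> vecs d a"
  by (simp add: fine_index_def vecs_def)

lemma in_cube_pair_iff:
  assumes g: "g \<in> Gd d" and m: "m \<in> vecs d a" and m': "m' \<in> vecs d a"
  shows "g \<in> cube d (2 * a) (\<lambda>l. 2 ^ a * m l + m' l) \<longleftrightarrow>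
    m = coarse_index d a g \<and> m' = fine_index d a g"
proof
  assume c: "g \<in> cube d (2 * a) (\<lambda>l. 2 ^ a * m l + m' l)"
  have "2 ^ a * m l + m' l = dyadic_index (2 * a) (g l)" if l: "l < d" for l
  proof (rule cube_index_eq_dyadic_index[OF c l])
    have "m l < 2 ^ a" "m' l < 2 ^ a"
      using m m' l by (auto simp: vecs_def)
    then have "2 ^ a * m l + m' l < 2 ^ a * (m l + 1)"
      by simp
    also have "\<dots> \<le> 2 ^ a * 2 ^ a"
      using \<open>m l < 2 ^ a\<close> by (intro mult_le_mono2) simp
    finally show "2 ^ a * m l + m' l < 2 ^ (2 * a)"
      by (simp add: power_add[symmetric] mult_2)
  qed
  note eq = this
  have "m l = coarse_index d a g l \<and> m' l = fine_index d a g l" for l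
  proof (cases "l < d")
    case True
    have "m' l < 2 ^ a"
      using m' True by (auto simp: vecs_def)
    with eq[OF True, symmetric] True show ?thesis
      by (simp add: coarse_index_def fine_index_def)
  next
    case False
    with m m' show ?thesis
      by (simp add: coarse_index_def fine_index_def vecs_def PiE_iff extensional_def)
  qed
  then show "m = coarse_index d a g \<and> m' = fine_index d a g"
    by (simp add: fun_eq_iff)
next
  assume "m = coarse_index d a g \<and> m' = fine_index d a g"
  then have "cube d (2 * a) (\<lambda>l. 2 ^ a * m l + m' l) = cube d (2 * a) (\<lambda>l. dyadic_index (2 * a) (g l))"
    by (intro cube_cong) (simp add: coarse_index_def fine_index_def)
  with in_cube_dyadic_index[OF g] show "g \<in> cube d (2 * a) (\<lambda>l. 2 ^ a * m l + m' l)"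
    by simp
qed

lemma coarse_fine_index_agree:
  assumes "agree d (2 * a) g h"
  shows "coarse_index d a g = coarse_index d a h" and "fine_index d a g = fine_index d a h"
proof -
  have "dyadic_index (2 * a) (g l) = dyadic_index (2 * a) (h l)" if "l < d" for l
    using assms that by (intro dyadic_index_cong) simp
  then show "coarse_index d a g = coarse_index d a h" "fine_index d a g = fine_index d a h"
    by (auto simp: coarse_index_def fine_index_def intro!: restrict_ext)
qed

lemma Fpi_iff:
  "g \<in> Gd d \<Longrightarrow> g \<in> Fpi d \<pi> s \<longleftrightarrow>
    Rk d (2 * ms s) g = Wk d (ms s) (\<pi> s (coarse_index d (ms s) g)) (fine_index d (ms s) g)"
  unfolding Fpi_def using in_cube_pair_iff coarse_index_in_vecs fine_index_in_vecs by blast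

definition flip_digit :: "nat \<Rightarrow> (nat \<Rightarrow> nat \<Rightarrow> bool) \<Rightarrow> nat \<Rightarrow> nat \<Rightarrow> bool" where
  "flip_digit p g = g(0 := (g 0)(p := \<not> g 0 p))"

lemma flip_digit_apply: "flip_digit p g l t = (if l = 0 \<and> t = p then \<not> g l t else g l t)"
  by (simp add: flip_digit_def)

lemma flip_digit_in_Gd: "0 < d \<Longrightarrow> g \<in> Gd d \<Longrightarrow> flip_digit p g \<in> Gd d"
  unfolding Gd_def flip_digit_def by (auto simp: PiE_iff extensional_def)

lemma Rk_flip_digit:
  assumes "0 < d"
  shows "Rk d j (flip_digit j g) = - Rk d j g"
proof -
  have split: "Rk d j h = (if h 0 j then -1 else 1) * (\<Prod>l\<in>{..<d} - {0}. if h l j then -1 else 1)" for h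
    unfolding Rk_eq_prod using assms by (subst prod.remove[of _ 0]) auto
  have "(\<Prod>l\<in>{..<d} - {0}. if flip_digit j g l j then -1 else 1) =
      (\<Prod>l\<in>{..<d} - {0}. if g l j then -1 else (1::real))"
    by (intro prod.cong) (auto simp: flip_digit_apply)
  then show ?thesis
    by (simp add: split[of "flip_digit j g"] split[of g] flip_digit_apply)
qed

lemma Fpi_cong_agree:
  assumes "g \<in> Gd d" "h \<in> Gd d" and "agree d (Suc (2 * ms s)) g h"
  shows "g \<in> Fpi d \<pi> s \<longleftrightarrow> h \<in> Fpi d \<pi> s"
proof -
  have "agree d (2 * ms s) g h"
    using assms(3) by simp
  note coarse_fine_index_agree[OF this]
  moreover have "Rk d (2 * ms s) g = Rk d (2 * ms s) h"
    unfolding Rk_eq_prod using assms(3) by (intro prod.cong) auto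
  ultimately show ?thesis
    using Fpi_iff assms(1,2) by metis
qed

text \<open>Both sides of the defining equation of \<open>F\<^sub>s\<close> are \<open>\<plusminus>1\<close>, and flipping digit \<open>2 m\<^sub>s\<close>
  changes the sign of the left side only.\<close>
lemma flip_digit_in_Fpi_iff:
  assumes d: "0 < d" and g: "g \<in> Gd d"
  shows "flip_digit (2 * ms s) g \<in> Fpi d \<pi> s \<longleftrightarrow> g \<notin> Fpi d \<pi> s"
proof -
  let ?a = "ms s"
  let ?w = "Wk d ?a (\<pi> s (coarse_index d ?a g)) (fine_index d ?a g)"
  have "agree d (2 * ?a) (flip_digit (2 * ?a) g) g"
    by (simp add: flip_digit_apply)
  note coarse_fine_index_agree[OF this]
  then have "flip_digit (2 * ?a) g \<in> Fpi d \<pi> s \<longleftrightarrow> - Rk d (2 * ?a) g = ?w"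
    using Fpi_iff[OF flip_digit_in_Gd[OF d g]] Rk_flip_digit[OF d] by simp
  also have "\<dots> \<longleftrightarrow> Rk d (2 * ?a) g \<noteq> ?w"
  proof -
    have "\<bar>Rk d (2 * ?a) g\<bar> = 1" "\<bar>?w\<bar> = 1"
      by (simp_all add: Rk_def Wk_def abs_Wv)
    then show ?thesis
      by (auto simp: abs_if split: if_splits)
  qed
  also have "\<dots> \<longleftrightarrow> g \<notin> Fpi d \<pi> s"
    using Fpi_iff[OF g] by simp
  finally show ?thesis .
qed

lemma depends_on_digits_Fpi: "depends_on_digits d (Suc (2 * ms s)) (indicator (Fpi d \<pi> s))"
  unfolding depends_on_digits_def
proof (intro ballI impI)
  fix g h assume "g \<in> Gd d" "h \<in> Gd d" "agree d (Suc (2 * ms s)) g h"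
  then have "g \<in> Fpi d \<pi> s \<longleftrightarrow> h \<in> Fpi d \<pi> s"
    by (rule Fpi_cong_agree)
  then show "indicator (Fpi d \<pi> s) g = indicator (Fpi d \<pi> s) h"
    by (simp add: indicator_def)
qed

lemma depends_on_digits_Ftil:
  assumes "\<forall>t\<in>{1..j}. 2 * ms t < k"
  shows "depends_on_digits d k (indicator (Ftil d \<pi> j))"
  unfolding depends_on_digits_def
proof (intro ballI impI)
  fix g h assume g: "g \<in> Gd d" and h: "h \<in> Gd d" and gh: "agree d k g h"
  have "g \<in> Fpi d \<pi> t \<longleftrightarrow> h \<in> Fpi d \<pi> t" if "t \<in> {1..j}" for t
  proof (rule Fpi_cong_agree[OF g h])
    have "Suc (2 * ms t) \<le> k"
      using assms that by (simp add: Suc_le_eq)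
    with gh show "agree d (Suc (2 * ms t)) g h"
      by (rule agree_mono)
  qed
  with g h show "indicator (Ftil d \<pi> j) g = indicator (Ftil d \<pi> j) h"
    by (simp add: Ftil_def indicator_def)
qed

lemma Ftil_eq_Int_Fpi: "1 \<le> s \<Longrightarrow> Ftil d \<pi> s = Ftil d \<pi> (s - 1) \<inter> Fpi d \<pi> s"
proof -
  assume "1 \<le> s"
  then have "{1..s} = insert s {1..s - 1}"
    by auto
  then show ?thesis
    by (auto simp: Ftil_def)
qed

definition flip_index :: "(nat \<Rightarrow> nat) \<Rightarrow> nat \<Rightarrow> nat" where
  "flip_index m = m(0 := if even (m 0) then m 0 + 1 else m 0 - 1)"

lemma bit_flip_lowest: "bit (if even a then a + 1 else a - 1) i \<longleftrightarrow> bit (a::nat) i \<noteq> (i = 0)"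
proof (cases i)
  case (Suc j)
  have "(if even a then a + 1 else a - 1) div 2 = a div 2"
    by presburger
  then show ?thesis
    by (simp add: Suc bit_Suc)
qed (simp add: bit_0)

lemma cpt_flip_index:
  assumes "0 < d"
  shows "cpt d (Suc k) (flip_index m) = flip_digit k (cpt d (Suc k) m)"
proof (intro ext)
  fix l t
  show "cpt d (Suc k) (flip_index m) l t = flip_digit k (cpt d (Suc k) m) l t"
  proof (cases "l < d")
    case True
    then show ?thesis
      by (auto simp: cpt_apply flip_digit_apply flip_index_def bit_flip_lowest)
  next
    case False
    with assms show ?thesis
      by (simp add: cpt_def flip_digit_apply)
  qed
qed

lemma flip_index_in_vecs:
  assumes "0 < d" and m: "m \<in> vecs d (Suc j)"
  shows "flip_index m \<in> vecs d (Suc j)"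
proof -
  have "m 0 < 2 * 2 ^ j"
    using assms by (auto simp: vecs_def)
  then have "(if even (m 0) then m 0 + 1 else m 0 - 1) < 2 ^ Suc j"
    by (auto elim!: evenE)
  with assms show ?thesis
    by (auto simp: vecs_def flip_index_def PiE_iff extensional_def)
qed

lemma flip_index_flip_index: "flip_index (flip_index m) = m"
  by (auto simp: flip_index_def fun_eq_iff elim!: oddE)

lemma flip_index_child:
  "\<sigma> 0 \<le> 1 \<Longrightarrow> flip_index (\<lambda>l. 2 * p l + \<sigma> l) = (\<lambda>l. 2 * p l + (\<sigma>(0 := 1 - \<sigma> 0)) l)"
  by (auto simp: flip_index_def fun_eq_iff le_Suc_eq)

lemma set_integral_Fpi_half:
  fixes f :: "(nat \<Rightarrow> nat \<Rightarrow> bool) \<Rightarrow> real"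
  assumes d: "0 < d" and f: "depends_on_digits d (2 * ms s) f"
  shows "(LINT g : Fpi d \<pi> s | mu d. f g) = (LINT g | mu d. f g) / 2"
proof -
  let ?K = "Suc (2 * ms s)"
  have fK: "depends_on_digits d ?K f"
    using f by (rule depends_on_digits_mono) simp
  have flip_invariant: "f (flip_digit (2 * ms s) (cpt d ?K m)) = f (cpt d ?K m)" for m
    using f flip_digit_in_Gd[OF d cpt_in_Gd] cpt_in_Gd
    unfolding depends_on_digits_def by (simp add: flip_digit_apply)
  have half: "2 * (\<Sum>m\<in>vecs d ?K. if cpt d ?K m \<in> Fpi d \<pi> s then f (cpt d ?K m) else 0)
      = (\<Sum>m\<in>vecs d ?K. f (cpt d ?K m))"
  proof (rule sum_involution_half[where \<phi>=flip_index])
    fix m assume m: "m \<in> vecs d ?K"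
    show "flip_index m \<in> vecs d ?K"
      by (rule flip_index_in_vecs[OF d m])
    show "flip_index (flip_index m) = m"
      by (rule flip_index_flip_index)
    show "cpt d ?K (flip_index m) \<in> Fpi d \<pi> s \<longleftrightarrow> cpt d ?K m \<notin> Fpi d \<pi> s"
      using flip_digit_in_Fpi_iff[OF d cpt_in_Gd] by (simp add: cpt_flip_index[OF d])
    show "f (cpt d ?K (flip_index m)) = f (cpt d ?K m)"
      using flip_invariant by (simp add: cpt_flip_index[OF d])
  qed
  have "(LINT g : Fpi d \<pi> s | mu d. f g)
      = (1/2) ^ (d * ?K) * (\<Sum>m\<in>vecs d ?K. indicator (Fpi d \<pi> s) (cpt d ?K m) * f (cpt d ?K m))"
    unfolding set_integral_eq_integral_indicator
    by (rule integral_depends_on_digits[OF depends_on_digits_mult[OF depends_on_digits_Fpi fK]])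
  also have "\<dots> = (1/2) ^ (d * ?K) * (\<Sum>m\<in>vecs d ?K. if cpt d ?K m \<in> Fpi d \<pi> s then f (cpt d ?K m) else 0)"
    by (simp add: indicator_times_eq_if)
  also have "\<dots> = (1/2) ^ (d * ?K) * (\<Sum>m\<in>vecs d ?K. f (cpt d ?K m)) / 2"
    using half by simp
  also have "\<dots> = (LINT g | mu d. f g) / 2"
    by (simp add: integral_depends_on_digits[OF fK])
  finally show ?thesis .
qed

subsection \<open>Cubes meeting \<open>F\<close>\<close>

lemma ms_Suc_eq: "1 \<le> t \<Longrightarrow> ms (Suc t) = 4 * ms t + 2"
  by (cases t) auto

lemma ms_mono:
  assumes "i \<le> j"
  shows "ms i \<le> ms j"
proof (rule lift_Suc_mono_le[OF _ assms])
  show "ms t \<le> ms (Suc t)" for t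
    by (cases t) auto
qed

lemma double_ms_less_ms: "1 \<le> i \<Longrightarrow> i < j \<Longrightarrow> 2 * ms i + 1 < ms j"
  using ms_mono[of "Suc i" j] ms_Suc_eq[of i] by simp

lemma ms_inj:
  assumes "1 \<le> i" and "1 \<le> j" and "ms i = ms j"
  shows "i = j"
proof (rule ccontr)
  assume "i \<noteq> j"
  then consider "i < j" | "j < i"
    by linarith
  then show False
  proof cases
    case 1
    with double_ms_less_ms[OF assms(1)] assms(3) show False
      by fastforce
  next
    case 2
    with double_ms_less_ms[OF assms(2)] assms(3) show False
      by fastforce
  qed
qed

lemma le_Suc_ms: "t \<le> Suc (ms t)"
  by (induct t rule: ms.induct) auto

definition halving_levels :: "nat \<Rightarrow> nat set" where
  "halving_levels k = {t. 1 \<le> t \<and> 2 * ms t < k}"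

lemma finite_halving_levels: "finite (halving_levels k)"
proof (rule finite_subset)
  show "halving_levels k \<subseteq> {..k}"
  proof
    fix t assume "t \<in> halving_levels k"
    with le_Suc_ms[of t] show "t \<in> {..k}"
      by (simp add: halving_levels_def)
  qed
qed simp

lemma card_halving_levels_Suc:
  "card (halving_levels (Suc k)) = card (halving_levels k) + (if \<exists>t\<ge>1. 2 * ms t = k then 1 else 0)"
proof (cases "\<exists>t\<ge>1. 2 * ms t = k")
  case True
  then obtain t0 where t0: "1 \<le> t0" "2 * ms t0 = k"
    by blast
  have "1 \<le> t \<and> 2 * ms t = k \<longleftrightarrow> t = t0" for t
    using t0 ms_inj[of t t0] by auto
  then have "halving_levels (Suc k) = insert t0 (halving_levels k)"
    by (auto simp: halving_levels_def less_Suc_eq)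
  moreover have "t0 \<notin> halving_levels k"
    using t0 by (simp add: halving_levels_def)
  ultimately show ?thesis
    using True finite_halving_levels by simp
next
  case False
  then have "halving_levels (Suc k) = halving_levels k"
    by (auto simp: halving_levels_def less_Suc_eq)
  with False show ?thesis
    by simp
qed

lemma halving_levels_between:
  assumes "1 \<le> s" and "ms s \<le> k" and "k \<le> Suc (2 * ms s)"
  shows "halving_levels k = (if k = Suc (2 * ms s) then {1..s} else {1..s - 1})"
proof -
  have "2 * ms t < k \<longleftrightarrow> t < s \<or> (t = s \<and> k = Suc (2 * ms s))" if t: "1 \<le> t" for t
  proof (cases t s rule: linorder_cases)
    case less
    with double_ms_less_ms[OF t] assms(2) show ?thesis
      by fastforce
  next
    case equal
    with assms(3) show ?thesis
      by auto
  next
    case greater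
    with double_ms_less_ms[OF assms(1)] assms(3) show ?thesis
      by fastforce
  qed
  then show ?thesis
    by (auto simp: halving_levels_def)
qed

text \<open>Starting from \<open>c\<close>, the constraints \<open>F\<^sub>1, \<dots>, F\<^sub>j\<close> are enforced one after another by
  flipping digit \<open>2 m\<^sub>t\<close>; only digits at positions \<open>\<ge> k\<close> are ever changed.\<close>
primrec repair ::
  "nat \<Rightarrow> (nat \<Rightarrow> (nat \<Rightarrow> nat) \<Rightarrow> nat \<Rightarrow> nat) \<Rightarrow> nat \<Rightarrow> (nat \<Rightarrow> nat \<Rightarrow> bool) \<Rightarrow> nat \<Rightarrow> nat \<Rightarrow> nat \<Rightarrow> bool"
where
  "repair d \<pi> k c 0 = c"
| "repair d \<pi> k c (Suc j) =
     (if k \<le> 2 * ms (Suc j) \<and> repair d \<pi> k c j \<notin> Fpi d \<pi> (Suc j)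
      then flip_digit (2 * ms (Suc j)) (repair d \<pi> k c j) else repair d \<pi> k c j)"

lemma repair_in_Gd: "0 < d \<Longrightarrow> c \<in> Gd d \<Longrightarrow> repair d \<pi> k c j \<in> Gd d"
  by (induct j) (auto simp: flip_digit_in_Gd)

lemma repair_digit_stable:
  assumes "i \<le> j" and untouched: "\<And>q. i < q \<Longrightarrow> q \<le> j \<Longrightarrow> t \<noteq> 2 * ms q \<or> 2 * ms q < k"
  shows "repair d \<pi> k c j l t = repair d \<pi> k c i l t"
  using assms(1)
proof (induct j rule: dec_induct)
  case (step n)
  then have "t \<noteq> 2 * ms (Suc n) \<or> 2 * ms (Suc n) < k"
    using untouched by simp
  with step.hyps(3) show ?case
    by (auto simp: flip_digit_apply)
qed simp

lemma repair_low_digit: "t < k \<Longrightarrow> repair d \<pi> k c j l t = c l t"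
  using repair_digit_stable[of 0 j t k d \<pi> c l] by auto

lemma repair_digit_eq:
  assumes "1 \<le> j" and "t \<le> 2 * ms j"
  shows "repair d \<pi> k c (Suc t) l t = repair d \<pi> k c j l t"
proof (cases "j \<le> Suc t")
  case True
  show ?thesis
  proof (rule repair_digit_stable[OF True])
    fix q assume "j < q"
    with double_ms_less_ms[OF assms(1)] have "2 * ms j + 1 < ms q"
      by blast
    with assms(2) show "t \<noteq> 2 * ms q \<or> 2 * ms q < k"
      by simp
  qed
next
  case False
  have "repair d \<pi> k c j l t = repair d \<pi> k c (Suc t) l t"
  proof (rule repair_digit_stable)
    show "Suc t \<le> j"
      using False by simp
    fix q assume "Suc t < q"
    with le_Suc_ms[of q] show "t \<noteq> 2 * ms q \<or> 2 * ms q < k"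
      by simp
  qed
  then show ?thesis
    by simp
qed

lemma repair_in_Fpi:
  assumes d: "0 < d" and c: "c \<in> Gd d" and j: "1 \<le> j"
    and constraints: "\<forall>t\<in>halving_levels k. c \<in> Fpi d \<pi> t"
  shows "repair d \<pi> k c j \<in> Fpi d \<pi> j"
proof (cases "k \<le> 2 * ms j")
  case True
  obtain j' where j': "j = Suc j'"
    using j by (cases j) auto
  have "repair d \<pi> k c j' \<in> Gd d"
    by (rule repair_in_Gd[OF d c])
  with True show ?thesis
    using flip_digit_in_Fpi_iff[OF d, where s=j and \<pi>=\<pi>] by (auto simp: j')
next
  case False
  then have "agree d (Suc (2 * ms j)) (repair d \<pi> k c j) c"
    by (simp add: repair_low_digit)
  moreover have "c \<in> Fpi d \<pi> j"
    using constraints j False by (simp add: halving_levels_def)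
  ultimately show ?thesis
    using Fpi_cong_agree[OF repair_in_Gd[OF d c] c] by blast
qed

lemma Finf_agree_iff:
  assumes d: "0 < d" and c: "c \<in> Gd d"
  shows "(\<exists>g\<in>Finf d \<pi>. agree d k g c) \<longleftrightarrow> (\<forall>t\<in>halving_levels k. c \<in> Fpi d \<pi> t)"
proof
  assume "\<exists>g\<in>Finf d \<pi>. agree d k g c"
  then obtain g where g: "g \<in> Finf d \<pi>" and gc: "agree d k g c"
    by blast
  show "\<forall>t\<in>halving_levels k. c \<in> Fpi d \<pi> t"
  proof
    fix t assume t: "t \<in> halving_levels k"
    then have "agree d (Suc (2 * ms t)) g c"
      using gc by (simp add: halving_levels_def)
    moreover have "g \<in> Gd d" "g \<in> Fpi d \<pi> t"
      using g t by (auto simp: Finf_def halving_levels_def)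
    ultimately show "c \<in> Fpi d \<pi> t"
      using Fpi_cong_agree[OF _ c] by blast
  qed
next
  assume constraints: "\<forall>t\<in>halving_levels k. c \<in> Fpi d \<pi> t"
  define g where "g = (\<lambda>l\<in>{..<d}. \<lambda>t. repair d \<pi> k c (Suc t) l t)"
  have g_Gd: "g \<in> Gd d"
    by (simp add: g_def Gd_def)
  have "g \<in> Fpi d \<pi> j" if j: "1 \<le> j" for j
  proof -
    have "agree d (Suc (2 * ms j)) g (repair d \<pi> k c j)"
      using repair_digit_eq[OF j] by (simp add: g_def)
    then show ?thesis
      using Fpi_cong_agree[OF g_Gd repair_in_Gd[OF d c]] repair_in_Fpi[OF d c j constraints]
      by blast
  qed
  moreover have "agree d k g c"
    by (simp add: g_def repair_low_digit del: repair.simps)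
  ultimately show "\<exists>g\<in>Finf d \<pi>. agree d k g c"
    using g_Gd by (auto simp: Finf_def)
qed

lemma cube_inter_Finf_iff:
  assumes "0 < d"
  shows "cube d k m \<inter> Finf d \<pi> \<noteq> {} \<longleftrightarrow> (\<forall>t\<in>halving_levels k. cpt d k m \<in> Fpi d \<pi> t)"
proof -
  have "cube d k m \<inter> Finf d \<pi> \<noteq> {} \<longleftrightarrow> (\<exists>g\<in>Finf d \<pi>. g \<in> cube d k m)"
    by blast
  also have "\<dots> \<longleftrightarrow> (\<exists>g\<in>Finf d \<pi>. agree d k g (cpt d k m))"
    by (rule bex_cong[OF refl]) (simp add: cube_iff_agree_cpt Finf_def)
  also have "\<dots> \<longleftrightarrow> (\<forall>t\<in>halving_levels k. cpt d k m \<in> Fpi d \<pi> t)"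
    by (rule Finf_agree_iff[OF assms cpt_in_Gd])
  finally show ?thesis .
qed

subsection \<open>The quasimeasure \<open>\<tau>\<^sub>F\<close>\<close>

lemma child_cube_inter_Finf_iff:
  assumes d: "0 < d" and parent: "cube d k p \<inter> Finf d \<pi> \<noteq> {}"
    and \<sigma>: "\<sigma> \<in> PiE {..<d} (\<lambda>_. {0, 1})"
  shows "cube d (Suc k) (\<lambda>l. 2 * p l + \<sigma> l) \<inter> Finf d \<pi> \<noteq> {} \<longleftrightarrow>
    (\<forall>t. 1 \<le> t \<and> 2 * ms t = k \<longrightarrow> cpt d (Suc k) (\<lambda>l. 2 * p l + \<sigma> l) \<in> Fpi d \<pi> t)"
proof -
  let ?c = "cpt d (Suc k) (\<lambda>l. 2 * p l + \<sigma> l)"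
  have parent_in: "\<forall>t\<in>halving_levels k. cpt d k p \<in> Fpi d \<pi> t"
    using cube_inter_Finf_iff[OF d, THEN iffD1, OF parent] .
  have "?c \<in> cube d k p"
    using cube_child_subset[OF \<sigma>] cpt_in_cube by blast
  then have agree_parent: "agree d k ?c (cpt d k p)"
    unfolding cube_iff_agree_cpt by (rule conjunct2)
  have low: "?c \<in> Fpi d \<pi> t" if t: "t \<in> halving_levels k" for t
  proof -
    have "Suc (2 * ms t) \<le> k"
      using t by (simp add: halving_levels_def)
    with agree_parent have "agree d (Suc (2 * ms t)) ?c (cpt d k p)"
      by (rule agree_mono)
    with parent_in t show ?thesis
      using Fpi_cong_agree[OF cpt_in_Gd cpt_in_Gd] by blast
  qed
  show ?thesis
    unfolding cube_inter_Finf_iff[OF d]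
    using low by (auto simp: halving_levels_def less_Suc_eq)
qed

lemma card_children_in_Fpi:
  assumes d: "0 < d" and k: "2 * ms t = k"
  shows "card {\<sigma> \<in> PiE {..<d} (\<lambda>_. {0, 1}). cpt d (Suc k) (\<lambda>l. 2 * p l + \<sigma> l) \<in> Fpi d \<pi> t}
    = 2 ^ (d - 1)"
proof -
  let ?A = "PiE {..<d} (\<lambda>_. {0::nat, 1})"
  let ?c = "\<lambda>\<sigma>. cpt d (Suc k) (\<lambda>l. 2 * p l + \<sigma> l)"
  let ?flip = "\<lambda>\<sigma>. \<sigma>(0 := 1 - \<sigma> 0)"
  have "2 * (\<Sum>\<sigma>\<in>?A. if ?c \<sigma> \<in> Fpi d \<pi> t then 1 else 0) = (\<Sum>\<sigma>\<in>?A. 1::nat)"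
  proof (rule sum_involution_half)
    fix \<sigma> assume \<sigma>: "\<sigma> \<in> ?A"
    then have \<sigma>0: "\<sigma> 0 \<in> {0, 1}"
      using d by (auto simp: PiE_iff)
    with \<sigma> d show "?flip \<sigma> \<in> ?A"
      by (auto simp: PiE_iff extensional_def)
    from \<sigma>0 show "?flip (?flip \<sigma>) = \<sigma>"
      by (auto simp: fun_eq_iff)
    from \<sigma>0 have "\<sigma> 0 \<le> 1"
      by auto
    then have "?c (?flip \<sigma>) = cpt d (Suc k) (flip_index (\<lambda>l. 2 * p l + \<sigma> l))"
      by (simp only: flip_index_child)
    also have "\<dots> = flip_digit k (?c \<sigma>)"
      by (rule cpt_flip_index[OF d])
    finally show "?c (?flip \<sigma>) \<in> Fpi d \<pi> t \<longleftrightarrow> ?c \<sigma> \<notin> Fpi d \<pi> t"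
      using flip_digit_in_Fpi_iff[OF d cpt_in_Gd, where s=t and \<pi>=\<pi>] k by simp
  qed simp
  then have "2 * card {\<sigma> \<in> ?A. ?c \<sigma> \<in> Fpi d \<pi> t} = 2 ^ d"
    by (simp add: sum.inter_filter[symmetric] finite_PiE card_PiE numeral_2_eq_2)
  moreover have "(2::nat) ^ d = 2 * 2 ^ (d - 1)"
    using d by (cases d) auto
  ultimately show ?thesis
    by simp
qed

lemma card_children_meeting_Finf:
  assumes d: "0 < d" and parent: "cube d k p \<inter> Finf d \<pi> \<noteq> {}"
  shows "card {\<sigma> \<in> PiE {..<d} (\<lambda>_. {0, 1}). cube d (Suc k) (\<lambda>l. 2 * p l + \<sigma> l) \<inter> Finf d \<pi> \<noteq> {}}
     = (if \<exists>t\<ge>1. 2 * ms t = k then 2 ^ (d - 1) else 2 ^ d)"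
proof (cases "\<exists>t\<ge>1. 2 * ms t = k")
  case False
  with child_cube_inter_Finf_iff[OF d parent] show ?thesis
    by (simp add: card_PiE numeral_2_eq_2 cong: conj_cong)
next
  case True
  then obtain t0 where t0: "1 \<le> t0" "2 * ms t0 = k"
    by blast
  have "1 \<le> t \<and> 2 * ms t = k \<longleftrightarrow> t = t0" for t
    using t0 ms_inj[of t t0] by auto
  with child_cube_inter_Finf_iff[OF d parent]
  have "{\<sigma> \<in> PiE {..<d} (\<lambda>_. {0, 1}). cube d (Suc k) (\<lambda>l. 2 * p l + \<sigma> l) \<inter> Finf d \<pi> \<noteq> {}}
      = {\<sigma> \<in> PiE {..<d} (\<lambda>_. {0, 1}). cpt d (Suc k) (\<lambda>l. 2 * p l + \<sigma> l) \<in> Fpi d \<pi> t0}"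
    by auto
  with True card_children_in_Fpi[OF d t0(2)] show ?thesis
    by simp
qed

lemma tauE_Finf:
  assumes d: "0 < d"
  shows "tauE d (Finf d \<pi>) k m =
    (if cube d k m \<inter> Finf d \<pi> = {} then 0 else 2 ^ card (halving_levels k) / 2 ^ (d * k))"
proof (induct k arbitrary: m)
  case 0
  have "cube d 0 m \<inter> Finf d \<pi> \<noteq> {}"
    using cube_inter_Finf_iff[OF d] by (simp add: halving_levels_def)
  then show ?case
    by (simp add: halving_levels_def)
next
  case (Suc k)
  let ?p = "\<lambda>l. m l div 2"
  show ?case
  proof (cases "cube d (Suc k) m \<inter> Finf d \<pi> = {}")
    case False
    then have "cube d k ?p \<inter> Finf d \<pi> \<noteq> {}"
      using cube_subset_parent by blast
    note children = card_children_meeting_Finf[OF d this]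
    have "2 ^ d = 2 * (2::real) ^ (d - 1)"
      using d by (cases d) auto
    with False Suc[of ?p] children \<open>cube d k ?p \<inter> Finf d \<pi> \<noteq> {}\<close> show ?thesis
      by (simp add: card_halving_levels_Suc power_add field_simps)
  qed simp
qed

lemma sum_cubes_Wk_tauE_Finf:
  assumes d: "0 < d" and "r \<le> k" and n: "\<forall>l<d. n l < 2 ^ k"
    and levels: "halving_levels k = {1..j}"
  shows "(\<Sum>m' \<in> {m' \<in> vecs d k. cube d k m' \<subseteq> cube d r m}. Wk d k n m' * tauE d (Finf d \<pi>) k m')
    = 2 ^ j * (LINT g : cube d r m \<inter> Ftil d \<pi> j | mu d. Wv d n g)"
proof -
  let ?f = "\<lambda>g. indicator (cube d r m) g * indicator (Ftil d \<pi> j) g * Wv d n g"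
  have "\<forall>t\<in>{1..j}. 2 * ms t < k"
    using levels unfolding halving_levels_def by blast
  then have f: "depends_on_digits d k ?f"
    using n by (intro depends_on_digits_mult depends_on_digits_cube[OF \<open>r \<le> k\<close>]
        depends_on_digits_Ftil depends_on_digits_Wv) blast+
  have term_eq: "(if cube d k m' \<subseteq> cube d r m then Wk d k n m' * tauE d (Finf d \<pi>) k m' else 0)
      = 2 ^ j / 2 ^ (d * k) * ?f (cpt d k m')" for m'
  proof -
    have "cube d k m' \<inter> Finf d \<pi> = {} \<longleftrightarrow> \<not> (\<forall>t\<in>{1..j}. cpt d k m' \<in> Fpi d \<pi> t)"
      using cube_inter_Finf_iff[OF d, of k m' \<pi>] levels by blast
    also have "\<dots> \<longleftrightarrow> cpt d k m' \<notin> Ftil d \<pi> j"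
      using cpt_in_Gd by (simp add: Ftil_def)
    finally show ?thesis
      using cube_subset_iff_cpt[OF \<open>r \<le> k\<close>] tauE_Finf[OF d] levels
      by (simp add: Wk_def indicator_def)
  qed
  have "(\<Sum>m' \<in> {m' \<in> vecs d k. cube d k m' \<subseteq> cube d r m}. Wk d k n m' * tauE d (Finf d \<pi>) k m')
      = (\<Sum>m'\<in>vecs d k. 2 ^ j / 2 ^ (d * k) * ?f (cpt d k m'))"
    by (simp add: sum.inter_filter vecs_def finite_PiE term_eq)
  also have "\<dots> = 2 ^ j * integral\<^sup>L (mu d) ?f"
    by (simp add: integral_depends_on_digits[OF f] sum_distrib_left power_one_over)
  finally show ?thesis
    by (simp add: set_integral_eq_integral_indicator indicator_inter_arith mult.assoc)
qed

lemma qint_tauE_Finf: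
  assumes d: "0 < d" and s: "1 \<le> s" and n: "\<forall>l<d. n l < 2 ^ (2 * ms s + 1)"
  obtains k where "ms s \<le> k" and "k \<le> Suc (2 * ms s)" and "\<forall>l<d. n l < 2 ^ k"
    and "qint d (tauE d (Finf d \<pi>)) (ms s) m n
      = 2 ^ (if k = Suc (2 * ms s) then s else s - 1) *
        (LINT g : cube d (ms s) m \<inter> Ftil d \<pi> (if k = Suc (2 * ms s) then s else s - 1) | mu d. Wv d n g)"
proof -
  define k where "k = (LEAST k. ms s \<le> k \<and> (\<forall>l<d. n l < 2 ^ k))"
  have k: "ms s \<le> k" "\<forall>l<d. n l < 2 ^ k"
    using LeastI[of "\<lambda>k. ms s \<le> k \<and> (\<forall>l<d. n l < 2 ^ k)" "Suc (2 * ms s)"] n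
    by (simp_all add: k_def)
  have k_le: "k \<le> Suc (2 * ms s)"
    unfolding k_def using n by (intro Least_le) simp
  have "halving_levels k = {1..(if k = Suc (2 * ms s) then s else s - 1)}"
    using halving_levels_between[OF s k(1) k_le] by simp
  then have "qint d (tauE d (Finf d \<pi>)) (ms s) m n
      = 2 ^ (if k = Suc (2 * ms s) then s else s - 1) *
        (LINT g : cube d (ms s) m \<inter> Ftil d \<pi> (if k = Suc (2 * ms s) then s else s - 1) | mu d. Wv d n g)"
    unfolding qint_def Let_def k_def[symmetric] by (rule sum_cubes_Wk_tauE_Finf[OF d k(1) k(2)])
  with k k_le show thesis
    using that by blast
qed

lemma set_integral_Fpi_cube:
  assumes d: "0 < d" and s: "1 \<le> s" and n: "\<forall>l<d. n l < 2 ^ (2 * ms s + 1)"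
    and sub: "cube d (ms s) mD \<subseteq> Ftil d \<pi> (s - 1)"
  shows "(LINT g : Fpi d \<pi> s \<inter> cube d (ms s) mD | mu d. Wv d n g)
    = (1/2) ^ s * qint d (tauE d (Finf d \<pi>)) (ms s) mD n"
proof -
  obtain k where k: "ms s \<le> k" "k \<le> Suc (2 * ms s)" "\<forall>l<d. n l < 2 ^ k"
    and qint: "qint d (tauE d (Finf d \<pi>)) (ms s) mD n
      = 2 ^ (if k = Suc (2 * ms s) then s else s - 1) *
        (LINT g : cube d (ms s) mD \<inter> Ftil d \<pi> (if k = Suc (2 * ms s) then s else s - 1) | mu d. Wv d n g)"
    using qint_tauE_Finf[OF d s n] .
  show ?thesis
  proof (cases "k = Suc (2 * ms s)")
    case True
    have "cube d (ms s) mD \<inter> Ftil d \<pi> s = Fpi d \<pi> s \<inter> cube d (ms s) mD"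
      using sub Ftil_eq_Int_Fpi[OF s] by blast
    with True qint show ?thesis
      by (simp add: power_one_over)
  next
    case False
    have "cube d (ms s) mD \<inter> Ftil d \<pi> (s - 1) = cube d (ms s) mD"
      using sub by blast
    with False qint have qint_cube: "qint d (tauE d (Finf d \<pi>)) (ms s) mD n
        = 2 ^ (s - 1) * (LINT g : cube d (ms s) mD | mu d. Wv d n g)"
      by simp
    have "depends_on_digits d (2 * ms s) (\<lambda>g. indicator (cube d (ms s) mD) g * Wv d n g)"
      using k False
      by (intro depends_on_digits_mult depends_on_digits_cube depends_on_digits_Wv)
        (auto intro: less_le_trans)
    then have "(LINT g : Fpi d \<pi> s \<inter> cube d (ms s) mD | mu d. Wv d n g)
        = (LINT g : cube d (ms s) mD | mu d. Wv d n g) / 2"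
      using set_integral_Fpi_half[OF d]
      by (simp add: set_integral_eq_integral_indicator indicator_inter_arith mult.assoc)
    also have "\<dots> = ((1/2) ^ s * 2 ^ (s - 1)) * (LINT g : cube d (ms s) mD | mu d. Wv d n g)"
      using s by (cases s) (simp_all add: power_one_over)
    finally show ?thesis
      by (simp add: qint_cube mult.assoc)
  qed
qed

theorem lemma5:
  fixes d s :: nat and n mD :: "nat \<Rightarrow> nat"
    and \<pi> :: "nat \<Rightarrow> (nat \<Rightarrow> nat) \<Rightarrow> (nat \<Rightarrow> nat)"
  assumes "d \<ge> 2" and "s \<ge> 1"
    and "\<forall>l<d. n l < 2 ^ (2 * ms s + 1)"
    and "\<forall>l<d. mD l < 2 ^ ms s"
    and "\<forall>t\<ge>1. bij_betw (\<pi> t) (vecs d (ms t)) (vecs d (ms t))"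
  shows "(cube d (ms s) mD \<subseteq> Ftil d (\<lambda>_. id) (s - 1) \<longrightarrow>
           (LINT g : Fpi d (\<lambda>_. id) s \<inter> cube d (ms s) mD | mu d. Wv d n g)
             = (1/2) ^ s * qint d (tauE d (Finf d (\<lambda>_. id))) (ms s) mD n)
       \<and> (cube d (ms s) mD \<subseteq> Ftil d \<pi> (s - 1) \<longrightarrow>
           (LINT g : Fpi d \<pi> s \<inter> cube d (ms s) mD | mu d. Wv d n g)
             = (1/2) ^ s * qint d (tauE d (Finf d \<pi>)) (ms s) mD n)"
proof -
  have "0 < d"
    using assms(1) by simp
  then show ?thesis
    using set_integral_Fpi_cube[OF _ assms(2,3)] by blast
qed

end
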